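(* Let $(V,\kappa)$ be a real pre-Hilbert space and $D:V\to V$ a $\kappa$-skew-symmetric operator which integrates to a continuous $\kappa$-orthogonal one-parameter group $\gamma$ on $V$. Assume that $D(V)$ is dense in the completion $V_\kappa$. Then there exists a $\kappa$-orthogonal complex structure $I$ on $\mathcal D^\infty(\overline D)\subseteq V_\kappa$ which commutes with $\gamma(\mathbb R)$ and is $\omega_D$-negative, i.e. $(v,w)\mapsto\omega_D(-Iv,w)$ is a positive definite symmetric bilinear form on $\mathcal D^\infty(\overline D)$, where $\omega_D(v,w):=\kappa(\overline Dv,w)$.
   Context: $\overline D$ is the closure of $D$ in $V_\kappa$ (equivalently, the infinitesimal generator of the extension of $\gamma$ to a strongly continuous orthogonal one-parameter group on $V_\kappa$), and $\mathcal D^\infty(\overline D)=\bigcap_{n\ge1}\mathcal D(\overline D^n)$. A complex structure is a real linear $I$ with $I^2=-1$; $\kappa$ is extended to $V_\kappa$ by continuity. *)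

theory Defs
  imports "HOL-Analysis.Analysis"
begin

text \<open>The pre-Hilbert space (V, kappa) is modelled as a dense linear subspace V of a
real Hilbert space 'a (its completion V_kappa); kappa is the inner product of 'a.\<close>

definition op_graph :: "'a set \<Rightarrow> ('a \<Rightarrow> 'a) \<Rightarrow> ('a \<times> 'a) set" where
  "op_graph V f = (\<lambda>v. (v, f v)) ` V"

definition closed_graph :: "'a::topological_space set \<Rightarrow> ('a \<Rightarrow> 'a) \<Rightarrow> ('a \<times> 'a) set" where
  "closed_graph V f = closure (op_graph V f)"

definition closure_dom :: "'a::topological_space set \<Rightarrow> ('a \<Rightarrow> 'a) \<Rightarrow> 'a set" where
  "closure_dom V f = {x. \<exists>y. (x, y) \<in> closed_graph V f}"

text \<open>The closure of the operator f (well defined whenever f is closable).\<close>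
definition closure_op :: "'a::topological_space set \<Rightarrow> ('a \<Rightarrow> 'a) \<Rightarrow> 'a \<Rightarrow> 'a" where
  "closure_op V f x = (THE y. (x, y) \<in> closed_graph V f)"

fun closure_pow_dom :: "'a::topological_space set \<Rightarrow> ('a \<Rightarrow> 'a) \<Rightarrow> nat \<Rightarrow> 'a set" where
  "closure_pow_dom V f 0 = UNIV"
| "closure_pow_dom V f (Suc n) =
     {x \<in> closure_dom V f. closure_op V f x \<in> closure_pow_dom V f n}"

definition smooth_dom :: "'a::topological_space set \<Rightarrow> ('a \<Rightarrow> 'a) \<Rightarrow> 'a set" where
  "smooth_dom V f = (\<Inter>n\<in>{1..}. closure_pow_dom V f n)"

end

theory Submission
  imports Defs "HOL-Computational_Algebra.Formal_Power_Series"
begin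

text \<open>The closure \<open>A\<close> of \<open>D\<close> is skew-symmetric, and \<open>1 \<plusminus> A\<close> are onto: a vector orthogonal to
  the range of \<open>1 + s A\<close> produces, along the group \<open>\<gamma>\<close>, a bounded solution of \<open>f' = - f / s\<close>, hence
  is 0. So the resolvents \<open>R = (1 - A)\<^sup>-\<^sup>1\<close> and \<open>R' = (1 + A)\<^sup>-\<^sup>1\<close> are bounded, and
  \<open>B = A R R' = (R - R') / 2\<close> is a bounded skew operator, injective because \<open>D V\<close> is dense, which
  commutes with every bounded operator commuting with \<open>R\<close> and \<open>R'\<close>, in particular with \<open>\<gamma>\<close>.
  Its polar decomposition \<open>B = I M\<close>, with \<open>M = sqrt (- B\<^sup>2)\<close> built from the binomial series of
  \<open>sqrt (1 - x)\<close>, yields an orthogonal complex structure \<open>I\<close> commuting with \<open>\<gamma>\<close>. For smooth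
  \<open>v = R (R' u)\<close> one finds \<open>A (- I v) = M u\<close>, so that \<open>\<omega>\<^sub>D(- I v, w) = inner (M (R' u)) (R' u')\<close>
  is symmetric and positive definite.\<close>

section \<open>Dense subspaces of Hilbert spaces\<close>

lemma subspace_closure:
  fixes S :: "'a::real_normed_vector set"
  assumes "subspace S"
  shows "subspace (closure S)"
  unfolding subspace_def
proof (intro conjI ballI allI)
  show "0 \<in> closure S"
    using assms closure_subset subspace_0 by blast
next
  fix a b assume "a \<in> closure S" "b \<in> closure S"
  then obtain sa sb where "\<And>n. sa n \<in> S" "sa \<longlonglongrightarrow> a" "\<And>n. sb n \<in> S" "sb \<longlonglongrightarrow> b"
    unfolding closure_sequential by blast
  then show "a + b \<in> closure S"
    unfolding closure_sequential
    by (intro exI[of _ "\<lambda>n. sa n + sb n"]) (auto intro: tendsto_intros assms[THEN subspace_add])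
next
  fix c :: real and a assume "a \<in> closure S"
  then obtain sa where "\<And>n. sa n \<in> S" "sa \<longlonglongrightarrow> a"
    unfolding closure_sequential by blast
  then show "c *\<^sub>R a \<in> closure S"
    unfolding closure_sequential
    by (intro exI[of _ "\<lambda>n. c *\<^sub>R sa n"]) (auto intro: tendsto_intros assms[THEN subspace_scale])
qed

lemma continuous_eq_on_dense:
  fixes f g :: "'a::topological_space \<Rightarrow> 'b::t2_space"
  assumes "continuous_on UNIV f" "continuous_on UNIV g" "closure S = UNIV"
    and "\<And>x. x \<in> S \<Longrightarrow> f x = g x"
  shows "f x = g x"
proof -
  have "closure S \<subseteq> {x. f x = g x}"
    using assms by (intro closure_minimal closed_Collect_eq) auto
  then show ?thesis using assms(3) by blast
qed

lemma continuous_le_on_dense: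
  fixes f g :: "'a::topological_space \<Rightarrow> real"
  assumes "continuous_on UNIV f" "continuous_on UNIV g" "closure S = UNIV"
    and "\<And>x. x \<in> S \<Longrightarrow> f x \<le> g x"
  shows "f x \<le> g x"
proof -
  have "closure S \<subseteq> {x. f x \<le> g x}"
    using assms by (intro closure_minimal closed_Collect_le) auto
  then show ?thesis using assms(3) by blast
qed

lemma inner_eq_zero_on_dense:
  fixes w :: "'a::real_inner"
  assumes "closure S = UNIV" "\<And>x. x \<in> S \<Longrightarrow> inner w x = 0"
  shows "w = 0"
proof -
  have "continuous_on UNIV (inner w)"
    by (intro continuous_intros)
  then have "inner w w = 0"
    using continuous_eq_on_dense[of "inner w" "\<lambda>_. 0" S w] assms by auto
  then show ?thesis by simp
qed

lemma bounded_linear_extension: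
  fixes f :: "'a::real_normed_vector \<Rightarrow> 'b::{real_normed_vector,complete_space}"
  assumes X: "subspace X" "closure X = UNIV"
    and f_add: "\<And>x y. x \<in> X \<Longrightarrow> y \<in> X \<Longrightarrow> f (x + y) = f x + f y"
    and f_scale: "\<And>x c. x \<in> X \<Longrightarrow> f (c *\<^sub>R x) = c *\<^sub>R f x"
    and f_bound: "\<And>x. x \<in> X \<Longrightarrow> norm (f x) \<le> K * norm x"
  obtains g where "bounded_linear g" "\<And>x. x \<in> X \<Longrightarrow> g x = f x"
    "\<And>x. norm (g x) \<le> K * norm x"
proof -
  have f_diff: "f (x - y) = f x - f y" if "x \<in> X" "y \<in> X" for x y
    using f_add[OF that(1) subspace_scale[OF X(1) that(2), of "-1"]] f_scale[OF that(2), of "-1"]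
    by simp
  have "uniformly_continuous_on X f"
    unfolding uniformly_continuous_on_def
  proof (intro allI impI)
    fix e :: real assume e: "0 < e"
    show "\<exists>d>0. \<forall>x\<in>X. \<forall>x'\<in>X. dist x' x < d \<longrightarrow> dist (f x') (f x) < e"
    proof (intro exI[of _ "e / (\<bar>K\<bar> + 1)"] conjI ballI impI)
      fix x x' assume xx: "x \<in> X" "x' \<in> X" and d: "dist x' x < e / (\<bar>K\<bar> + 1)"
      have "dist (f x') (f x) = norm (f (x' - x))"
        using f_diff[OF xx(2,1)] by (simp add: dist_norm)
      also have "\<dots> \<le> K * norm (x' - x)"
        using f_bound X(1) xx by (simp add: subspace_diff)
      also have "\<dots> \<le> (\<bar>K\<bar> + 1) * norm (x' - x)"
        by (intro mult_right_mono) auto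
      also have "\<dots> < e"
        using d by (simp add: dist_norm field_simps)
      finally show "dist (f x') (f x) < e" .
    qed (use e in simp)
  qed
  then obtain g where "uniformly_continuous_on (closure X) g" and fg: "\<And>x. x \<in> X \<Longrightarrow> f x = g x"
    using uniformly_continuous_on_extension_on_closure by metis
  then have g: "continuous_on UNIV g"
    using X(2) uniformly_continuous_imp_continuous by fastforce
  have g_add: "g (x + y) = g x + g y" for x y
  proof -
    have "closure (X \<times> X) = UNIV"
      using X(2) by (simp add: closure_Times)
    moreover have "continuous_on UNIV (\<lambda>p. g (fst p + snd p))"
      "continuous_on UNIV (\<lambda>p. g (fst p) + g (snd p))"
      by (intro continuous_intros continuous_on_compose2[OF g]; simp)+
    ultimately show ?thesis
      using continuous_eq_on_dense[of "\<lambda>p. g (fst p + snd p)" "\<lambda>p. g (fst p) + g (snd p)"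
          "X \<times> X" "(x, y)"] X(1)
      by (auto simp: fg[symmetric] f_add subspace_add)
  qed
  have g_scale: "g (c *\<^sub>R x) = c *\<^sub>R g x" for c x
    by (rule continuous_eq_on_dense[OF _ _ X(2)])
      (auto intro!: continuous_intros continuous_on_compose2[OF g] g
        simp: fg[symmetric] f_scale subspace_scale[OF X(1)])
  have g_bound: "norm (g x) \<le> K * norm x" for x
    by (rule continuous_le_on_dense[OF _ _ X(2)])
      (auto intro!: continuous_intros g simp: fg[symmetric] f_bound)
  have "bounded_linear g"
    by (rule bounded_linear_intro[where K=K]) (auto simp: g_add g_scale g_bound mult.commute)
  then show ?thesis
    using that fg g_bound by metis
qed

lemma bounded_linear_inner_eq:
  fixes f :: "'a::real_inner \<Rightarrow> 'b::real_inner"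
  assumes "bounded_linear f" "\<And>x. norm (f x) = norm x"
  shows "inner (f x) (f y) = inner x y"
proof -
  have "2 * inner (f x) (f y) = norm (f x + f y)^2 - norm (f x)^2 - norm (f y)^2"
    "2 * inner x y = norm (x + y)^2 - norm x ^2 - norm y ^2"
    by (simp_all add: power2_norm_eq_inner inner_add_left inner_add_right inner_commute)
  then show ?thesis
    using assms
    by (simp add: linear_simps(1)[OF assms(1), symmetric])
qed

lemma norm_diff_parallelogram:
  fixes x a b :: "'a::real_inner"
  shows "norm (a - b)^2 = 2 * norm (x - a)^2 + 2 * norm (x - b)^2 - 4 * norm (x - (1/2) *\<^sub>R (a + b))^2"
  unfolding power2_norm_eq_inner
  by (simp add: inner_diff_left inner_diff_right inner_add_left inner_add_right
      inner_commute algebra_simps)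

lemma convex_minimizing_sequence_Cauchy:
  fixes S :: "'a::real_inner set"
  assumes "convex S" "\<And>n. z n \<in> S" "\<And>s. s \<in> S \<Longrightarrow> d \<le> norm (x - s)"
    and lim: "(\<lambda>n. norm (x - z n)) \<longlonglongrightarrow> d"
  shows "Cauchy z"
proof (rule metric_CauchyI)
  fix r :: real assume "0 < r"
  define \<delta> where "\<delta> n = norm (x - z n)^2 - d^2" for n
  have "\<delta> \<longlonglongrightarrow> d^2 - d^2"
    unfolding \<delta>_def by (intro tendsto_intros lim)
  then obtain N where N: "\<And>n. n \<ge> N \<Longrightarrow> \<bar>\<delta> n\<bar> < r^2 / 4"
    using LIMSEQ_D[of \<delta> 0 "r^2 / 4"] \<open>0 < r\<close> by auto
  have "norm (z m - z n) < r" if "m \<ge> N" "n \<ge> N" for m n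
  proof -
    have "(1/2) *\<^sub>R (z m + z n) \<in> S"
      using convexD[OF assms(1,2,2), of "1/2" "1/2" m n] by (simp add: scaleR_add_right)
    then have "d \<le> norm (x - (1/2) *\<^sub>R (z m + z n))"
      by (rule assms(3))
    moreover have "0 \<le> d"
      by (rule LIMSEQ_le_const[OF lim]) simp
    ultimately have "d^2 \<le> norm (x - (1/2) *\<^sub>R (z m + z n))^2"
      by (rule power_mono)
    then have "norm (z m - z n)^2 \<le> 2 * \<delta> m + 2 * \<delta> n"
      using norm_diff_parallelogram[of "z m" "z n" x] by (simp add: \<delta>_def)
    also have "\<dots> < r^2"
      using N[OF \<open>m \<ge> N\<close>] N[OF \<open>n \<ge> N\<close>] by linarith
    finally show ?thesis
      using \<open>0 < r\<close> by (simp add: power_less_imp_less_base)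
  qed
  then show "\<exists>N. \<forall>m\<ge>N. \<forall>n\<ge>N. dist (z m) (z n) < r"
    by (auto simp: dist_norm)
qed

lemma exists_nearest_point:
  fixes S :: "'a::{real_inner,complete_space} set"
  assumes "closed S" "convex S" "S \<noteq> {}"
  obtains y where "y \<in> S" "\<And>s. s \<in> S \<Longrightarrow> norm (x - y) \<le> norm (x - s)"
proof -
  define d where "d = infdist x S"
  have d_le: "d \<le> norm (x - s)" if "s \<in> S" for s
    using infdist_le[OF that, of x] by (simp add: d_def dist_norm)
  have "\<exists>s\<in>S. norm (x - s) < d + 1 / (real n + 1)" for n
  proof -
    have "(INF s\<in>S. dist x s) < d + 1 / (real n + 1)"
      using assms(3) by (simp add: d_def infdist_notempty)
    then show ?thesis
      using cINF_less_iff[OF assms(3) bdd_below_image_dist] by (auto simp: dist_norm)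
  qed
  then obtain z where z: "\<And>n. z n \<in> S" "\<And>n. norm (x - z n) < d + 1 / (real n + 1)"
    by metis
  have "(\<lambda>n. 1 / (real n + 1)) \<longlonglongrightarrow> 0"
    using LIMSEQ_inverse_real_of_nat by (simp add: inverse_eq_divide add.commute)
  then have upper: "(\<lambda>n. d + 1 / (real n + 1)) \<longlonglongrightarrow> d + 0"
    by (intro tendsto_intros)
  have lim: "(\<lambda>n. norm (x - z n)) \<longlonglongrightarrow> d"
  proof (rule real_tendsto_sandwich[where f="\<lambda>_. d" and h="\<lambda>n. d + 1 / (real n + 1)"])
    show "\<forall>\<^sub>F n in sequentially. d \<le> norm (x - z n)"
      using d_le z(1) by simp
    show "\<forall>\<^sub>F n in sequentially. norm (x - z n) \<le> d + 1 / (real n + 1)"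
      using z(2) by (simp add: less_imp_le)
  qed (use upper in auto)
  obtain y where y: "z \<longlonglongrightarrow> y"
    using convex_minimizing_sequence_Cauchy[OF assms(2) z(1) d_le lim]
    by (auto simp: Cauchy_convergent_iff convergent_def)
  have "norm (x - y) = d"
    using LIMSEQ_unique[OF tendsto_norm[OF tendsto_diff[OF tendsto_const y]] lim] .
  then show ?thesis
    using that closed_sequentially[OF assms(1) z(1) y] d_le by auto
qed

lemma subspace_dense_if_orthogonal_trivial:
  fixes M :: "'a::{real_inner,complete_space} set"
  assumes M: "subspace M" and perp: "\<And>w. (\<And>m. m \<in> M \<Longrightarrow> inner w m = 0) \<Longrightarrow> w = 0"
  shows "closure M = UNIV"
proof -
  have "x \<in> closure M" for x
  proof -
    have "convex (closure M)" "closure M \<noteq> {}"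
      using M subspace_imp_convex convex_closure closure_subset subspace_0 by blast+
    then obtain y where y: "y \<in> closure M"
      and nearest: "\<And>s. s \<in> closure M \<Longrightarrow> norm (x - y) \<le> norm (x - s)"
      using exists_nearest_point[OF closed_closure] by blast
    have "inner (x - y) m = 0" if "m \<in> M" for m
    proof -
      define b where "b = inner (x - y) m"
      define c where "c = inner m m"
      have "0 \<le> c" by (simp add: c_def)
      have "y + t *\<^sub>R m \<in> closure M" for t
        using subspace_closure[OF M] y closure_subset that
        by (blast intro: subspace_add subspace_scale)
      then have "norm (x - y)^2 \<le> norm (x - y - t *\<^sub>R m)^2" for t
        using nearest by (simp add: power_mono algebra_simps)
      then have "0 \<le> t^2 * c - 2 * t * b" for t
        unfolding power2_norm_eq_inner b_def c_def
        by (simp add: inner_diff_left inner_diff_right inner_commute algebra_simps power2_eq_square)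
      from this[of "b / (c + 1)"]
      have "0 \<le> (c + 1)^2 * ((b / (c + 1))^2 * c - 2 * (b / (c + 1)) * b)"
        by simp
      also have "\<dots> = ((c + 1) * (b / (c + 1)))^2 * c - 2 * ((c + 1) * (b / (c + 1))) * b * (c + 1)"
        by (simp only: power2_eq_square algebra_simps)
      also have "(c + 1) * (b / (c + 1)) = b"
        using \<open>0 \<le> c\<close> by simp
      also have "b^2 * c - 2 * b * b * (c + 1) = - (b^2 * (c + 2))"
        by (simp add: power2_eq_square algebra_simps)
      finally have "b^2 * (c + 2) \<le> 0" by simp
      then show ?thesis
        using \<open>0 \<le> c\<close> by (simp add: b_def mult_le_0_iff)
    qed
    then show ?thesis
      using perp[of "x - y"] y by simp
  qed
  then show ?thesis by blast
qed

section \<open>Positive operators and their square roots\<close>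

definition self_adjoint :: "('a::real_inner \<Rightarrow> 'a) \<Rightarrow> bool" where
  "self_adjoint T \<longleftrightarrow> (\<forall>x y. inner (T x) y = inner x (T y))"

definition positive_op :: "('a::real_inner \<Rightarrow> 'a) \<Rightarrow> bool" where
  "positive_op T \<longleftrightarrow> (\<forall>x. 0 \<le> inner (T x) x)"

lemma positive_op_Cauchy_Schwarz:
  fixes T :: "'a::real_inner \<Rightarrow> 'a"
  assumes "linear T" "self_adjoint T" "positive_op T"
  shows "(inner (T x) y)^2 \<le> inner (T x) x * inner (T y) y"
proof -
  define a b c where "a = inner (T x) x" and "b = inner (T x) y" and "c = inner (T y) y"
  have quadratic: "0 \<le> a + 2 * t * b + t^2 * c" for t
  proof -
    have "0 \<le> inner (T (x + t *\<^sub>R y)) (x + t *\<^sub>R y)"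
      using assms(3) by (simp add: positive_op_def)
    also have "\<dots> = a + t * inner (T y) x + t * b + t^2 * c"
      using assms(1)
      by (simp add: a_def b_def c_def linear_add linear_scale inner_add_left inner_add_right
          algebra_simps power2_eq_square)
    also have "inner (T y) x = b"
      using assms(2) by (simp add: self_adjoint_def b_def inner_commute)
    finally show ?thesis by (simp add: algebra_simps)
  qed
  have "0 \<le> c"
    using assms(3) by (simp add: positive_op_def c_def)
  show ?thesis
  proof (cases "c = 0")
    case True
    have "b = 0"
    proof (rule ccontr)
      assume "b \<noteq> 0"
      then show False
        using quadratic[of "- (a + 1) / (2 * b)"] True by (simp add: field_simps)
    qed
    then show ?thesis
      using True by (simp add: b_def c_def)
  next
    case False
    with \<open>0 \<le> c\<close> have "0 < c" by simp
    have "c * (a + 2 * (- b / c) * b + (- b / c)^2 * c) = a * c - b^2"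
      using \<open>0 < c\<close> by (simp add: field_simps power2_eq_square)
    then have "0 \<le> a * c - b^2"
      using quadratic[of "- b / c"] \<open>0 < c\<close> by (metis zero_le_mult_iff less_imp_le)
    then show ?thesis by (simp add: a_def b_def c_def)
  qed
qed

lemma positive_op_inner_eq_zero:
  fixes T :: "'a::real_inner \<Rightarrow> 'a"
  assumes "linear T" "self_adjoint T" "positive_op T" "inner (T x) x = 0"
  shows "T x = 0"
  using positive_op_Cauchy_Schwarz[OF assms(1-3), of x "T x"] assms(4) by simp

lemma self_adjoint_injective_dense_range:
  fixes T :: "'a::{real_inner,complete_space} \<Rightarrow> 'a"
  assumes "bounded_linear T" "self_adjoint T" "\<And>x. T x = 0 \<Longrightarrow> x = 0"
  shows "closure (range T) = UNIV"
proof (rule subspace_dense_if_orthogonal_trivial)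
  show "subspace (range T)"
    by (rule linear_subspace_image[OF bounded_linear.linear[OF assms(1)] subspace_UNIV])
  fix w assume "\<And>m. m \<in> range T \<Longrightarrow> inner w m = 0"
  then have "inner (T w) (T w) = 0"
    using assms(2) by (metis rangeI self_adjoint_def inner_commute)
  then show "w = 0"
    using assms(3) by simp
qed

lemma summable_norm_cancel_complete:
  fixes f :: "nat \<Rightarrow> 'a::{real_normed_vector,complete_space}"
  assumes "summable (\<lambda>n. norm (f n))"
  shows "summable f"
proof -
  have norms: "Cauchy (\<lambda>n. \<Sum>i<n. norm (f i))"
    using assms by (simp add: summable_iff_convergent Cauchy_convergent_iff)
  have "Cauchy (\<lambda>n. \<Sum>i<n. f i)"
  proof (rule metric_CauchyI)
    fix e :: real assume "0 < e"
    then obtain M where M: "\<And>m n. m \<ge> M \<Longrightarrow> n \<ge> M \<Longrightarrow>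
        dist (\<Sum>i<m. norm (f i)) (\<Sum>i<n. norm (f i)) < e"
      using metric_CauchyD[OF norms] by blast
    have "dist (\<Sum>i<m. f i) (\<Sum>i<n. f i) < e" if "m \<ge> M" "n \<ge> M" "m \<le> n" for m n
    proof -
      have "dist (\<Sum>i<m. f i) (\<Sum>i<n. f i) = norm (\<Sum>i=m..<n. f i)"
        using sum_diff_nat_ivl[OF le0 \<open>m \<le> n\<close>, of f]
        unfolding dist_commute[of "\<Sum>i<m. f i"] by (simp add: dist_norm atLeast0LessThan)
      also have "\<dots> \<le> (\<Sum>i=m..<n. norm (f i))"
        by (rule norm_sum)
      also have "\<dots> = dist (\<Sum>i<m. norm (f i)) (\<Sum>i<n. norm (f i))"
        using sum_diff_nat_ivl[OF le0 \<open>m \<le> n\<close>, of "\<lambda>i. norm (f i)"]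
          sum_nonneg[of "{m..<n}" "\<lambda>i. norm (f i)"]
        by (simp add: dist_real_def atLeast0LessThan)
      also have "\<dots> < e"
        using M that by blast
      finally show ?thesis .
    qed
    then show "\<exists>M. \<forall>m\<ge>M. \<forall>n\<ge>M. dist (\<Sum>i<m. f i) (\<Sum>i<n. f i) < e"
      by (metis dist_commute nle_le)
  qed
  then show ?thesis
    by (simp add: summable_iff_convergent Cauchy_convergent_iff)
qed

text \<open>The Taylor coefficients of \<open>sqrt (1 - x)\<close> at 0.\<close>

definition sqrt_coeff :: "nat \<Rightarrow> real" where
  "sqrt_coeff n = (-1)^n * ((1/2) gchoose n)"

lemma sqrt_coeff_0 [simp]: "sqrt_coeff 0 = 1"
  by (simp add: sqrt_coeff_def)

lemma gbinomial_minus_half_nonneg: "0 \<le> (real m - 1/2) gchoose m"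
proof -
  have "((real m - 1/2) gchoose m) * fact m = (\<Prod>i = 0..<m. (real m - 1/2) - of_nat i)"
    by (rule gbinomial_mult_fact')
  also have "\<dots> \<ge> 0"
    by (intro prod_nonneg) auto
  finally show ?thesis
    using fact_gt_zero[where 'a=real, of m] by (simp add: zero_le_mult_iff)
qed

lemma sum_sqrt_coeff: "(\<Sum>k\<le>m. sqrt_coeff k) = (real m - 1/2) gchoose m"
proof -
  have "(\<Sum>k\<le>m. sqrt_coeff k) = (\<Sum>k\<le>m. ((1/2::real) gchoose k) * (-1)^k)"
    by (simp add: sqrt_coeff_def mult.commute)
  also have "\<dots> = (-1)^m * ((1/2 - 1) gchoose m)"
    by (rule gbinomial_sum_lower_neg)
  also have "(1/2 - 1 :: real) = - (1/2)"
    by simp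
  also have "((- (1/2::real)) gchoose m) = (-1)^m * ((1/2 + of_nat m - 1) gchoose m)"
    by (rule gbinomial_minus)
  also have "(1/2 + of_nat m - 1 :: real) = real m - 1/2"
    by simp
  finally show ?thesis
    by (simp flip: power_add mult.assoc)
qed

lemma sqrt_coeff_nonpos:
  assumes "0 < n"
  shows "sqrt_coeff n \<le> 0"
proof -
  obtain m where n: "n = Suc m"
    using assms by (cases n) auto
  have "((real m - 1/2) + 1 gchoose Suc m) = ((real m - 1/2) gchoose m) * (((real m - 1/2) + 1) / of_nat (Suc m))"
    by (rule gbinomial_rec)
  also have "\<dots> \<le> (real m - 1/2) gchoose m"
    using gbinomial_minus_half_nonneg[of m] by (intro mult_left_le) auto
  finally have "(real (Suc m) - 1/2 gchoose Suc m) \<le> (real m - 1/2) gchoose m"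
    by (simp add: algebra_simps)
  then show ?thesis
    using sum_sqrt_coeff[of "Suc m"] sum_sqrt_coeff[of m] by (simp add: n)
qed

lemma sum_abs_sqrt_coeff_le: "(\<Sum>k<n. \<bar>sqrt_coeff k\<bar>) \<le> 2"
proof -
  have "(\<Sum>k<n. \<bar>sqrt_coeff k\<bar>) \<le> (\<Sum>k\<le>n. \<bar>sqrt_coeff k\<bar>)"
    by (intro sum_mono2) auto
  also have "\<dots> = (\<Sum>k\<le>n. (if k = 0 then 2 else 0) - sqrt_coeff k)"
    by (intro sum.cong) (auto simp: sqrt_coeff_nonpos abs_of_nonpos)
  also have "\<dots> = 2 - ((real n - 1/2) gchoose n)"
    by (simp add: sum_subtractf sum_sqrt_coeff)
  also have "\<dots> \<le> 2"
    using gbinomial_minus_half_nonneg[of n] by simp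
  finally show ?thesis .
qed

lemma summable_abs_sqrt_coeff: "summable (\<lambda>n. \<bar>sqrt_coeff n\<bar>)"
  by (rule summableI_nonneg_bounded[where x=2]) (auto intro: sum_abs_sqrt_coeff_le)

lemma suminf_abs_sqrt_coeff_le: "(\<Sum>n. \<bar>sqrt_coeff n\<bar>) \<le> 2"
  by (rule suminf_le_const[OF summable_abs_sqrt_coeff sum_abs_sqrt_coeff_le])

text \<open>The identity \<open>sqrt (1 - x)\<^sup>2 = 1 - x\<close> on coefficients, via Vandermonde's convolution.\<close>

lemma sqrt_coeff_convolution:
  "(\<Sum>i\<le>k. sqrt_coeff i * sqrt_coeff (k - i)) = (if k = 0 then 1 else if k = 1 then -1 else 0)"
proof -
  have "(\<Sum>i\<le>k. sqrt_coeff i * sqrt_coeff (k - i))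
      = (\<Sum>i\<in>{0..k}. (-1)^k * (((1/2::real) gchoose i) * ((1/2) gchoose (k - i))))"
  proof (intro sum.cong)
    fix i assume "i \<in> {0..k}"
    then have "(-1::real)^i * (-1)^(k - i) = (-1)^k"
      by (simp flip: power_add)
    moreover have "sqrt_coeff i * sqrt_coeff (k - i)
        = ((-1)^i * (-1)^(k - i)) * (((1/2::real) gchoose i) * ((1/2) gchoose (k - i)))"
      by (simp add: sqrt_coeff_def mult_ac)
    ultimately show "sqrt_coeff i * sqrt_coeff (k - i) = (-1)^k * (((1/2::real) gchoose i) * ((1/2) gchoose (k - i)))"
      by simp
  qed auto
  also have "\<dots> = (-1)^k * ((1/2 + 1/2 :: real) gchoose k)"
    by (simp only: gbinomial_Vandermonde flip: sum_distrib_left)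
  also have "(1/2 + 1/2 :: real) gchoose k = of_nat (1 choose k)"
    by (simp only: binomial_gbinomial) simp
  finally show ?thesis
    by (cases k; cases "k - 1") auto
qed

lemma square_minus_triangle_tendsto_zero:
  fixes a :: "nat \<Rightarrow> real"
  assumes "summable (\<lambda>n. \<bar>a n\<bar>)"
  shows "(\<lambda>N. (\<Sum>(i,j)\<in>{..<N} \<times> {..<N}. \<bar>a i\<bar> * \<bar>a j\<bar>)
              - (\<Sum>(i,j)\<in>{(i,j). i + j < N}. \<bar>a i\<bar> * \<bar>a j\<bar>)) \<longlonglongrightarrow> 0"
proof -
  define L where "L = (\<Sum>n. \<bar>a n\<bar>)"
  have "(\<lambda>N. (\<Sum>i<N. \<bar>a i\<bar>) * (\<Sum>j<N. \<bar>a j\<bar>)) \<longlonglongrightarrow> L * L"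
    unfolding L_def by (intro tendsto_mult summable_LIMSEQ assms)
  then have square: "(\<lambda>N. \<Sum>(i,j)\<in>{..<N} \<times> {..<N}. \<bar>a i\<bar> * \<bar>a j\<bar>) \<longlonglongrightarrow> L * L"
    by (simp add: sum_product sum.cartesian_product)
  have "(\<lambda>k. \<Sum>i\<le>k. \<bar>a i\<bar> * \<bar>a (k - i)\<bar>) sums (L * L)"
    unfolding L_def by (rule Cauchy_product_sums) (simp_all add: assms)
  then have triangle: "(\<lambda>N. \<Sum>(i,j)\<in>{(i,j). i + j < N}. \<bar>a i\<bar> * \<bar>a j\<bar>) \<longlonglongrightarrow> L * L"
    by (simp add: sums_def sum.triangle_reindex)
  show ?thesis
    using tendsto_diff[OF square triangle] by simp
qed

locale contraction =
  fixes Q :: "'a::{real_inner,complete_space} \<Rightarrow> 'a"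
  assumes bounded_linear_Q: "bounded_linear Q" and norm_Q_le: "\<And>x. norm (Q x) \<le> norm x"
begin

lemma bounded_linear_Q_pow: "bounded_linear (Q ^^ n)"
proof (induction n)
  case 0
  then show ?case by (simp add: id_def bounded_linear_ident)
next
  case (Suc n)
  then show ?case
    using bounded_linear_compose[OF bounded_linear_Q] by (simp add: comp_def)
qed

lemma norm_Q_pow_le: "norm ((Q ^^ n) x) \<le> norm x"
  by (induction n) (auto intro: order_trans norm_Q_le)

definition sqrt_partial :: "nat \<Rightarrow> 'a \<Rightarrow> 'a" where
  "sqrt_partial N x = (\<Sum>n<N. sqrt_coeff n *\<^sub>R (Q ^^ n) x)"

definition sqrt_series :: "'a \<Rightarrow> 'a" where
  "sqrt_series x = (\<Sum>n. sqrt_coeff n *\<^sub>R (Q ^^ n) x)"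

lemma norm_sqrt_term_le: "norm (sqrt_coeff n *\<^sub>R (Q ^^ n) x) \<le> \<bar>sqrt_coeff n\<bar> * norm x"
  using mult_left_mono[OF norm_Q_pow_le abs_ge_zero] by simp

lemma summable_norm_sqrt_terms: "summable (\<lambda>n. norm (sqrt_coeff n *\<^sub>R (Q ^^ n) x))"
  by (rule summable_comparison_test'[OF summable_mult2[OF summable_abs_sqrt_coeff, of "norm x"]])
    (use norm_sqrt_term_le in auto)

lemma summable_sqrt_terms: "summable (\<lambda>n. sqrt_coeff n *\<^sub>R (Q ^^ n) x)"
  by (rule summable_norm_cancel_complete[OF summable_norm_sqrt_terms])

lemma sqrt_partial_tendsto: "(\<lambda>N. sqrt_partial N x) \<longlonglongrightarrow> sqrt_series x"
  unfolding sqrt_partial_def sqrt_series_def by (rule summable_LIMSEQ[OF summable_sqrt_terms])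

lemma norm_sqrt_partial_le: "norm (sqrt_partial N x) \<le> 2 * norm x"
proof -
  have "norm (sqrt_partial N x) \<le> (\<Sum>n<N. \<bar>sqrt_coeff n\<bar> * norm x)"
    unfolding sqrt_partial_def by (intro norm_sum[THEN order_trans] sum_mono norm_sqrt_term_le)
  also have "\<dots> \<le> 2 * norm x"
    by (simp add: mult_right_mono sum_abs_sqrt_coeff_le flip: sum_distrib_right)
  finally show ?thesis .
qed

lemma bounded_linear_sqrt_series: "bounded_linear sqrt_series"
proof (rule bounded_linear_intro[where K=2])
  show "sqrt_series (x + y) = sqrt_series x + sqrt_series y" for x y
    unfolding sqrt_series_def
    by (simp add: linear_simps[OF bounded_linear_Q_pow] scaleR_add_right
        suminf_add[OF summable_sqrt_terms summable_sqrt_terms])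
  show "sqrt_series (c *\<^sub>R x) = c *\<^sub>R sqrt_series x" for c x
  proof -
    have "sqrt_series (c *\<^sub>R x) = (\<Sum>n. c *\<^sub>R (sqrt_coeff n *\<^sub>R (Q ^^ n) x))"
      by (simp add: sqrt_series_def linear_simps[OF bounded_linear_Q_pow] mult.commute)
    also have "\<dots> = c *\<^sub>R sqrt_series x"
      unfolding sqrt_series_def by (rule suminf_scaleR_right[OF summable_sqrt_terms, symmetric])
    finally show ?thesis .
  qed
  show "norm (sqrt_series x) \<le> norm x * 2" for x
    using norm_sqrt_partial_le by (intro tendsto_le[OF _ tendsto_const tendsto_norm[OF sqrt_partial_tendsto]])
      (auto simp: mult.commute)
qed

lemma sqrt_partial_diff: "sqrt_partial N (x - y) = sqrt_partial N x - sqrt_partial N y"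
  unfolding sqrt_partial_def
  by (simp add: linear_simps[OF bounded_linear_Q_pow] scaleR_diff_right sum_subtractf)

lemma sqrt_partial_square:
  "sqrt_partial N (sqrt_partial N x)
    = (\<Sum>(i,j)\<in>{..<N} \<times> {..<N}. (sqrt_coeff i * sqrt_coeff j) *\<^sub>R (Q ^^ (i + j)) x)"
proof -
  have "sqrt_partial N (sqrt_partial N x)
      = (\<Sum>i<N. \<Sum>j<N. (sqrt_coeff i * sqrt_coeff j) *\<^sub>R (Q ^^ (i + j)) x)"
    unfolding sqrt_partial_def
    by (simp add: real_vector.linear_sum[OF bounded_linear.linear[OF bounded_linear_Q_pow]]
        linear_simps[OF bounded_linear_Q_pow] scaleR_sum_right funpow_add)
  then show ?thesis
    by (simp add: sum.cartesian_product)
qed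

lemma triangle_sqrt_terms:
  assumes "2 \<le> N"
  shows "(\<Sum>(i,j)\<in>{(i,j). i + j < N}. (sqrt_coeff i * sqrt_coeff j) *\<^sub>R (Q ^^ (i + j)) x) = x - Q x"
proof -
  obtain M where N: "N = Suc (Suc M)"
    using assms by (metis add_2_eq_Suc le_Suc_ex)
  have "(\<Sum>k<Suc (Suc M). (\<Sum>i\<le>k. sqrt_coeff i * sqrt_coeff (k - i)) *\<^sub>R (Q ^^ k) x) = x - Q x" for M
  proof (induction M)
    case 0
    then show ?case by (simp add: sqrt_coeff_convolution)
  next
    case (Suc M)
    then show ?case
      by (simp only: sqrt_coeff_convolution) (simp del: atMost_Suc)
  qed
  then show ?thesis
    unfolding N by (simp add: sum.triangle_reindex scaleR_sum_left)
qed

lemma sqrt_partial_square_tendsto: "(\<lambda>N. sqrt_partial N (sqrt_partial N x)) \<longlonglongrightarrow> x - Q x"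
proof -
  define a where "a i j = (sqrt_coeff i * sqrt_coeff j) *\<^sub>R (Q ^^ (i + j)) x" for i j
  define b where "b i j = \<bar>sqrt_coeff i\<bar> * \<bar>sqrt_coeff j\<bar>" for i j
  define square :: "nat \<Rightarrow> (nat \<times> nat) set" where "square N = {..<N} \<times> {..<N}" for N
  define triangle :: "nat \<Rightarrow> (nat \<times> nat) set" where "triangle N = {(i,j). i + j < N}" for N
  have sub: "triangle N \<subseteq> square N" and fin: "finite (square N)" for N
    by (auto simp: square_def triangle_def)
  have bound: "norm (sqrt_partial N (sqrt_partial N x) - (x - Q x))
      \<le> ((\<Sum>(i,j)\<in>square N. b i j) - (\<Sum>(i,j)\<in>triangle N. b i j)) * norm x" if "2 \<le> N" for N
  proof -
    have "sqrt_partial N (sqrt_partial N x) - (x - Q x)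
        = (\<Sum>(i,j)\<in>square N. a i j) - (\<Sum>(i,j)\<in>triangle N. a i j)"
      using sqrt_partial_square[of N] triangle_sqrt_terms[OF that]
      by (simp add: a_def square_def triangle_def)
    also have "\<dots> = (\<Sum>(i,j)\<in>square N - triangle N. a i j)"
      by (rule sum_diff[OF fin sub, symmetric])
    finally have "norm (sqrt_partial N (sqrt_partial N x) - (x - Q x))
        = norm (\<Sum>(i,j)\<in>square N - triangle N. a i j)"
      by simp
    also have "\<dots> \<le> (\<Sum>(i,j)\<in>square N - triangle N. b i j * norm x)"
      by (intro norm_sum[THEN order_trans] sum_mono)
        (auto simp: a_def b_def abs_mult intro!: mult_left_mono norm_Q_pow_le)
    also have "\<dots> = ((\<Sum>(i,j)\<in>square N. b i j) - (\<Sum>(i,j)\<in>triangle N. b i j)) * norm x"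
      by (simp add: sum_diff[OF fin sub] split_def flip: sum_distrib_right)
    finally show ?thesis .
  qed
  have "(\<lambda>N. ((\<Sum>(i,j)\<in>square N. b i j) - (\<Sum>(i,j)\<in>triangle N. b i j)) * norm x) \<longlonglongrightarrow> 0"
    using tendsto_mult_left_zero[OF square_minus_triangle_tendsto_zero[OF summable_abs_sqrt_coeff]]
    by (simp add: b_def square_def triangle_def)
  then have "(\<lambda>N. sqrt_partial N (sqrt_partial N x) - (x - Q x)) \<longlonglongrightarrow> 0"
    by (rule Lim_null_comparison[rotated]) (use bound in \<open>auto simp: eventually_sequentially\<close>)
  then show ?thesis
    by (rule LIM_zero_cancel)
qed

lemma sqrt_partial_square_tendsto_sqrt_series:
  "(\<lambda>N. sqrt_partial N (sqrt_partial N x)) \<longlonglongrightarrow> sqrt_series (sqrt_series x)"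
proof -
  let ?S = sqrt_series and ?T = sqrt_partial
  have bound: "norm (?T N (?T N x) - ?S (?S x)) \<le> 2 * norm (?T N x - ?S x) + norm (?T N (?S x) - ?S (?S x))" for N
  proof -
    have eq: "?T N (?T N x) - ?S (?S x) = ?T N (?T N x - ?S x) + (?T N (?S x) - ?S (?S x))"
      by (simp add: sqrt_partial_diff)
    show ?thesis
      unfolding eq using norm_triangle_ineq[of "?T N (?T N x - ?S x)" "?T N (?S x) - ?S (?S x)"]
        norm_sqrt_partial_le[of N "?T N x - ?S x"]
      by linarith
  qed
  have "(\<lambda>N. 2 * norm (?T N x - ?S x) + norm (?T N (?S x) - ?S (?S x))) \<longlonglongrightarrow> 2 * 0 + 0"
    by (intro tendsto_intros tendsto_norm_zero LIM_zero sqrt_partial_tendsto)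
  then have "(\<lambda>N. ?T N (?T N x) - ?S (?S x)) \<longlonglongrightarrow> 0"
    unfolding mult_zero_right add_0
    by (rule Lim_null_comparison[rotated]) (use bound in \<open>simp add: always_eventually\<close>)
  then show ?thesis
    by (rule LIM_zero_cancel)
qed

lemma sqrt_series_square: "sqrt_series (sqrt_series x) = x - Q x"
  using LIMSEQ_unique[OF sqrt_partial_square_tendsto_sqrt_series sqrt_partial_square_tendsto] .


lemma sqrt_series_commute:
  assumes C: "bounded_linear C" and CQ: "\<And>y. C (Q y) = Q (C y)"
  shows "C (sqrt_series x) = sqrt_series (C x)"
proof -
  have "C ((Q ^^ n) y) = (Q ^^ n) (C y)" for n y
    by (induction n) (simp_all add: CQ)
  then show ?thesis
    unfolding sqrt_series_def bounded_linear.suminf[OF C summable_sqrt_terms]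
    by (simp add: linear_simps[OF C])
qed

lemma self_adjoint_sqrt_series:
  assumes "self_adjoint Q"
  shows "self_adjoint sqrt_series"
proof -
  have Q_pow: "inner ((Q ^^ n) x) y = inner x ((Q ^^ n) y)" for n x y
  proof (induction n arbitrary: y)
    case (Suc n)
    have "inner ((Q ^^ Suc n) x) y = inner ((Q ^^ n) x) (Q y)"
      using assms by (simp add: self_adjoint_def)
    also have "\<dots> = inner x ((Q ^^ Suc n) y)"
      by (simp add: Suc.IH funpow_Suc_right del: funpow.simps)
    finally show ?case .
  qed simp
  show ?thesis
    unfolding self_adjoint_def sqrt_series_def
      bounded_linear.suminf[OF bounded_linear_inner_left summable_sqrt_terms]
      bounded_linear.suminf[OF bounded_linear_inner_right summable_sqrt_terms]
    by (simp add: Q_pow)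
qed

text \<open>The zeroth coefficient is 1 and the others have total absolute value at most 1,
  while \<open>Q\<close> is a contraction.\<close>

lemma sqrt_series_nonneg: "0 \<le> inner (sqrt_series x) x"
proof -
  define h where "h n = sqrt_coeff n * inner ((Q ^^ n) x) x" for n
  have h_le: "\<bar>h n\<bar> \<le> \<bar>sqrt_coeff n\<bar> * (norm x * norm x)" for n
  proof -
    have "\<bar>inner ((Q ^^ n) x) x\<bar> \<le> norm x * norm x"
      using Cauchy_Schwarz_ineq2[of "(Q ^^ n) x" x] mult_right_mono[OF norm_Q_pow_le[of n x]]
      by (meson norm_ge_zero order_trans)
    then show ?thesis
      unfolding h_def abs_mult by (intro mult_left_mono) auto
  qed
  have summable_h: "summable h"
    by (rule summable_comparison_test'[OF summable_mult2[OF summable_abs_sqrt_coeff]]) (use h_le in auto)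
  have tail: "summable (\<lambda>n. \<bar>sqrt_coeff (Suc n)\<bar>)" "(\<Sum>n. \<bar>sqrt_coeff (Suc n)\<bar>) \<le> 1"
    using summable_Suc_iff[of "\<lambda>n. \<bar>sqrt_coeff n\<bar>"] summable_abs_sqrt_coeff
      suminf_split_head[OF summable_abs_sqrt_coeff] suminf_abs_sqrt_coeff_le
    by simp_all
  have summable_tail_h: "summable (\<lambda>n. h (Suc n))"
    using summable_h by (simp add: summable_Suc_iff)
  have "- (\<Sum>n. h (Suc n)) = (\<Sum>n. - h (Suc n))"
    by (rule suminf_minus[OF summable_tail_h, symmetric])
  also have "\<dots> \<le> (\<Sum>n. \<bar>sqrt_coeff (Suc n)\<bar> * (norm x * norm x))"
  proof (rule suminf_le)
    show "- h (Suc n) \<le> \<bar>sqrt_coeff (Suc n)\<bar> * (norm x * norm x)" for n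
      using h_le[of "Suc n"] by linarith
  qed (simp_all add: summable_minus summable_tail_h summable_mult2 tail(1))
  also have "\<dots> \<le> norm x * norm x"
    using tail suminf_nonneg[OF tail(1)]
    by (simp add: suminf_mult2[OF tail(1), symmetric] mult_left_le_one_le)
  finally have "0 \<le> h 0 + (\<Sum>n. h (Suc n))"
    by (simp add: h_def norm_eq_sqrt_inner)
  also have "\<dots> = (\<Sum>n. h n)"
    using suminf_split_head[OF summable_h] by simp
  also have "\<dots> = inner (sqrt_series x) x"
    unfolding h_def sqrt_series_def bounded_linear.suminf[OF bounded_linear_inner_left summable_sqrt_terms]
    by simp
  finally show ?thesis .
qed

end

text \<open>A bounded positive operator \<open>T \<le> K\<close> has the square root \<open>sqrt K * sqrt (1 - Q)\<close>
  with the contraction \<open>Q = 1 - T / K\<close>.\<close>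

lemma positive_op_sqrt:
  fixes T :: "'a::{real_inner,complete_space} \<Rightarrow> 'a"
  assumes T: "bounded_linear T" "self_adjoint T" "positive_op T"
  obtains S where "bounded_linear S" "self_adjoint S" "positive_op S" "\<And>x. S (S x) = T x"
    "\<And>C y. bounded_linear C \<Longrightarrow> (\<And>y. C (T y) = T (C y)) \<Longrightarrow> C (S y) = S (C y)"
proof -
  obtain K where K: "0 < K" "\<And>x. norm (T x) \<le> norm x * K"
    using bounded_linear.pos_bounded[OF T(1)] by blast
  define Q where "Q x = x - (1/K) *\<^sub>R T x" for x
  have Q: "bounded_linear Q"
    unfolding Q_def[abs_def]
    by (intro bounded_linear_sub bounded_linear_ident bounded_linear_compose[OF bounded_linear_scaleR_right T(1)])
  have Q_self_adjoint: "self_adjoint Q"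
    using T(2) by (simp add: self_adjoint_def Q_def inner_diff_left inner_diff_right)
  have inner_Q: "inner (Q x) x = norm x * norm x - inner (T x) x / K" for x
    by (simp add: Q_def inner_diff_left norm_eq_sqrt_inner)
  have "inner (T x) x \<le> norm x * K * norm x" for x
    using norm_cauchy_schwarz[of "T x" x] mult_right_mono[OF K(2)[of x] norm_ge_zero[of x]] by linarith
  then have Q_positive: "positive_op Q"
    using K(1) by (simp add: positive_op_def inner_Q field_simps)
  have inner_Q_le: "inner (Q x) x \<le> norm x * norm x" for x
    using T(3) K(1) unfolding inner_Q positive_op_def by (simp add: divide_nonneg_pos)
  have "norm (Q x) \<le> norm x" for x
  proof (cases "Q x = 0")
    case False
    have "(norm (Q x) * norm (Q x))^2 = (inner (Q x) (Q x))^2"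
      by (simp add: norm_eq_sqrt_inner)
    also have "\<dots> \<le> inner (Q x) x * inner (Q (Q x)) (Q x)"
      by (rule positive_op_Cauchy_Schwarz[OF bounded_linear.linear[OF Q] Q_self_adjoint Q_positive])
    also have "\<dots> \<le> (norm x * norm x) * (norm (Q x) * norm (Q x))"
      using Q_positive by (intro mult_mono inner_Q_le) (auto simp: positive_op_def)
    finally have "norm (Q x) * norm (Q x) \<le> norm x * norm x"
      using False by (simp add: power2_eq_square)
    then show ?thesis
      using power2_le_imp_le[of "norm (Q x)" "norm x"] by (simp add: power2_eq_square)
  qed simp
  then interpret contraction Q
    using Q by (simp add: contraction_def)
  define S where "S x = sqrt K *\<^sub>R sqrt_series x" for x
  have "bounded_linear S"
    unfolding S_def[abs_def] by (rule bounded_linear_compose[OF bounded_linear_scaleR_right bounded_linear_sqrt_series])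
  moreover have "S (S x) = T x" for x
    using K(1) by (simp add: S_def linear_simps[OF bounded_linear_sqrt_series] sqrt_series_square Q_def)
  moreover have "self_adjoint S"
    using self_adjoint_sqrt_series[OF Q_self_adjoint] by (simp add: self_adjoint_def S_def)
  moreover have "positive_op S"
    using sqrt_series_nonneg K(1) by (simp add: positive_op_def S_def)
  moreover have "C (S y) = S (C y)" if C: "bounded_linear C" and CT: "\<And>y. C (T y) = T (C y)" for C y
    using sqrt_series_commute[OF C, of y] CT by (simp add: S_def Q_def linear_simps[OF C])
  ultimately show ?thesis
    using that by blast
qed

lemma isometry_through_dense_range:
  fixes M B :: "'a::{real_inner,complete_space} \<Rightarrow> 'a"
  assumes M: "bounded_linear M" "self_adjoint M" "\<And>x. M x = 0 \<Longrightarrow> x = 0"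
    and B: "bounded_linear B" and norm_eq: "\<And>x. norm (M x) = norm (B x)"
  obtains J where "bounded_linear J" "\<And>x. J (M x) = B x" "\<And>y. norm (J y) = norm y"
proof -
  have dense: "closure (range M) = UNIV"
    by (rule self_adjoint_injective_dense_range[OF M])
  define f where "f y = B (inv M y)" for y
  have inv_M: "inv M (M x) = x" for x
    using M(3) linear_simps(2)[OF M(1)] by (metis eq_iff_diff_eq_0 inv_f_f injI)
  obtain J where J: "bounded_linear J" and J_f: "\<And>y. y \<in> range M \<Longrightarrow> J y = f y"
    and "\<And>y. norm (J y) \<le> 1 * norm y"
  proof (rule bounded_linear_extension[of "range M" f 1])
    show "subspace (range M)"
      by (rule linear_subspace_image[OF bounded_linear.linear[OF M(1)] subspace_UNIV])
  qed (auto simp: dense f_def inv_M norm_eq linear_simps[OF M(1), symmetric] linear_simps[OF B])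
  have JM: "J (M x) = B x" for x
    by (simp add: J_f f_def inv_M)
  have "continuous_on UNIV (\<lambda>y. norm (J y))"
    by (rule continuous_on_norm[OF linear_continuous_on[OF J]])
  then have "norm (J y) = norm y" for y
    by (rule continuous_eq_on_dense[OF _ _ dense]) (auto simp: JM norm_eq intro: continuous_intros)
  then show ?thesis
    using that J JM by blast
qed

text \<open>The polar decomposition \<open>B = J M\<close> of an injective bounded skew operator, with
  \<open>M = sqrt (- B\<^sup>2)\<close>; the phase \<open>J\<close> is then an orthogonal complex structure.\<close>

definition skew_polar_decomposition :: "('a::real_inner \<Rightarrow> 'a) \<Rightarrow> ('a \<Rightarrow> 'a) \<Rightarrow> ('a \<Rightarrow> 'a) \<Rightarrow> bool" where
  "skew_polar_decomposition B J M \<longleftrightarrow>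
     bounded_linear J \<and> bounded_linear M \<and> self_adjoint M \<and> positive_op M \<and>
     (\<forall>x. M x = 0 \<longrightarrow> x = 0) \<and> (\<forall>x. J (M x) = B x) \<and> (\<forall>x. J (J x) = - x) \<and>
     (\<forall>x y. inner (J x) (J y) = inner x y) \<and>
     (\<forall>C. bounded_linear C \<and> (\<forall>y. C (B y) = B (C y)) \<longrightarrow> (\<forall>y. C (J y) = J (C y) \<and> C (M y) = M (C y)))"

lemma skew_polar_decomposition_exists:
  fixes B :: "'a::{real_inner,complete_space} \<Rightarrow> 'a"
  assumes B: "bounded_linear B" and skew: "\<And>x y. inner (B x) y = - inner x (B y)"
    and inj: "\<And>x. B x = 0 \<Longrightarrow> x = 0"
  shows "\<exists>J M. skew_polar_decomposition B J M"
proof -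
  define T where "T x = - B (B x)" for x
  have T: "bounded_linear T"
    unfolding T_def[abs_def] by (intro bounded_linear_minus bounded_linear_compose[OF B B])
  have T_commute: "C (T y) = T (C y)" if "bounded_linear C" "\<And>y. C (B y) = B (C y)" for C y
    using that by (simp add: T_def linear_simps)
  have "inner (T x) x = inner (B x) (B x)" for x
    using skew[of "B x" x] by (simp add: T_def)
  then have T_positive: "positive_op T"
    by (simp add: positive_op_def)
  have T_self_adjoint: "self_adjoint T"
    using skew by (simp add: self_adjoint_def T_def)
  obtain M where M: "bounded_linear M" "self_adjoint M" "positive_op M"
    and MM: "\<And>x. M (M x) = T x"
    and M_commute: "\<And>C y. bounded_linear C \<Longrightarrow> (\<And>y. C (T y) = T (C y)) \<Longrightarrow> C (M y) = M (C y)"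
    using positive_op_sqrt[OF T T_self_adjoint T_positive] by blast
  have norm_M: "norm (M x) = norm (B x)" for x
  proof -
    have "inner (M x) (M x) = inner (B x) (B x)"
      using M(2) skew[of "B x" x] by (simp add: self_adjoint_def MM T_def inner_commute)
    then show ?thesis
      by (simp add: norm_eq_sqrt_inner)
  qed
  have M_inj: "x = 0" if "M x = 0" for x
    using norm_M[of x] that inj by simp
  have MB: "B (M y) = M (B y)" for y
    by (rule M_commute[OF B T_commute[OF B]]) simp
  obtain J where J: "bounded_linear J" and JM: "\<And>x. J (M x) = B x"
    and norm_J: "\<And>y. norm (J y) = norm y"
    using isometry_through_dense_range[OF M(1,2) M_inj B norm_M] by blast
  have J_cont: "continuous_on UNIV J"
    by (rule linear_continuous_on[OF J])
  have dense: "closure (range (\<lambda>x. M (M x))) = UNIV"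
    using M(2) M_inj
    by (intro self_adjoint_injective_dense_range bounded_linear_compose[OF M(1) M(1)])
      (auto simp: self_adjoint_def)
  have JJ: "J (J y) = - y" for y
  proof (rule continuous_eq_on_dense[of "\<lambda>y. J (J y)" "\<lambda>y. - y", OF _ _ dense])
    show "continuous_on UNIV (\<lambda>y. J (J y))"
      by (rule continuous_on_compose2[OF J_cont J_cont]) auto
    show "continuous_on UNIV (\<lambda>y::'a. - y)"
      by (intro continuous_intros)
    show "J (J z) = - z" if z: "z \<in> range (\<lambda>x. M (M x))" for z
    proof -
      obtain a where a: "z = M (M a)"
        using z by blast
      then have "J (J z) = J (B (M a))"
        by (simp add: JM)
      also have "B (M a) = M (B a)"
        by (rule MB)
      also have "J (M (B a)) = B (B a)"
        by (rule JM)
      also have "\<dots> = - z"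
        using a by (simp add: MM T_def)
      finally show ?thesis .
    qed
  qed
  have J_commute: "C (J y) = J (C y)" if C: "bounded_linear C" "\<And>y. C (B y) = B (C y)" for C y
  proof (rule continuous_eq_on_dense[of "\<lambda>y. C (J y)" "\<lambda>y. J (C y)",
        OF _ _ self_adjoint_injective_dense_range[OF M(1,2) M_inj]])
    have C_cont: "continuous_on UNIV C"
      by (rule linear_continuous_on[OF C(1)])
    show "continuous_on UNIV (\<lambda>y. C (J y))"
      by (rule continuous_on_compose2[OF C_cont J_cont]) auto
    show "continuous_on UNIV (\<lambda>y. J (C y))"
      by (rule continuous_on_compose2[OF J_cont C_cont]) auto
    show "C (J z) = J (C z)" if "z \<in> range M" for z
      using that M_commute[OF C(1) T_commute[OF C]] by (auto simp: JM C(2))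
  qed
  have "\<forall>y. C (J y) = J (C y) \<and> C (M y) = M (C y)"
    if "bounded_linear C \<and> (\<forall>y. C (B y) = B (C y))" for C
    using that J_commute M_commute T_commute by blast
  then show ?thesis
    unfolding skew_polar_decomposition_def
    using J M M_inj JM JJ bounded_linear_inner_eq[OF J norm_J]
    by (intro exI[of _ J] exI[of _ M]) simp
qed

section \<open>The closure of a skew-symmetric operator\<close>

lemma closure_op_eq_continuous_extension:
  fixes f g :: "'a::real_normed_vector \<Rightarrow> 'a"
  assumes "continuous_on UNIV g" "closure V = UNIV" "\<And>v. v \<in> V \<Longrightarrow> g v = f v"
  shows "closure_op V f x = g x"
proof -
  have "op_graph V f \<subseteq> {p. snd p = g (fst p)}"
    using assms(3) by (auto simp: op_graph_def)
  moreover have "closed {p. snd p = g (fst p)}"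
    by (intro closed_Collect_eq continuous_on_compose2[OF assms(1)] continuous_intros) auto
  ultimately have "closed_graph V f \<subseteq> {p. snd p = g (fst p)}"
    unfolding closed_graph_def by (rule closure_minimal)
  then have unique: "y = g x" if "(x, y) \<in> closed_graph V f" for y
    using that by auto
  obtain v where v: "\<And>n. v n \<in> V" "v \<longlonglongrightarrow> x"
    using assms(2) closure_sequential by blast
  have "(\<lambda>n. (v n, f (v n))) \<longlonglongrightarrow> (x, g x)"
    using v assms(3) continuous_on_tendsto_compose[OF assms(1) v(2)] by (simp add: tendsto_Pair)
  then have "(x, g x) \<in> closed_graph V f"
    unfolding closed_graph_def closure_sequential op_graph_def
    using v(1) by (auto intro!: exI[of _ "\<lambda>n. (v n, f (v n))"])
  then show ?thesis
    unfolding closure_op_def using unique by blast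
qed

locale skew_operator =
  fixes V :: "'a::{real_inner, complete_space} set"
    and D :: "'a \<Rightarrow> 'a"
  assumes V_subspace: "subspace V"
    and V_dense: "closure V = UNIV"
    and D_add: "\<forall>v\<in>V. \<forall>w\<in>V. D (v + w) = D v + D w"
    and D_scale: "\<forall>v\<in>V. \<forall>c::real. D (c *\<^sub>R v) = c *\<^sub>R D v"
    and D_skew: "\<forall>v\<in>V. \<forall>w\<in>V. inner (D v) w = - inner v (D w)"
begin

abbreviation "\<Gamma> \<equiv> closed_graph V D"
abbreviation "Dom \<equiv> closure_dom V D"
abbreviation "A \<equiv> closure_op V D"

lemma subspace_op_graph: "subspace (op_graph V D)"
  unfolding subspace_def op_graph_def
proof (intro conjI ballI allI)
  have "D 0 = 0"
    using D_scale V_subspace subspace_0 by (metis scaleR_zero_left)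
  then show "(0::'a \<times> 'a) \<in> (\<lambda>v. (v, D v)) ` V"
    using V_subspace subspace_0 by (force simp: zero_prod_def)
next
  fix p q assume "p \<in> (\<lambda>v. (v, D v)) ` V" "q \<in> (\<lambda>v. (v, D v)) ` V"
  then show "p + q \<in> (\<lambda>v. (v, D v)) ` V"
    using D_add V_subspace by (force intro: subspace_add)
next
  fix c :: real and p assume "p \<in> (\<lambda>v. (v, D v)) ` V"
  then show "c *\<^sub>R p \<in> (\<lambda>v. (v, D v)) ` V"
    using D_scale V_subspace by (force intro: subspace_scale)
qed

lemma subspace_closed_graph: "subspace \<Gamma>"
  unfolding closed_graph_def by (rule subspace_closure[OF subspace_op_graph])

lemma closed_closed_graph: "closed \<Gamma>"
  unfolding closed_graph_def by simp

lemma graph_in_closed_graph: "v \<in> V \<Longrightarrow> (v, D v) \<in> \<Gamma>"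
  using closure_subset[of "op_graph V D"] by (auto simp: closed_graph_def op_graph_def)

lemma closed_graph_subset_closed:
  assumes "closed T" "\<And>v. v \<in> V \<Longrightarrow> (v, D v) \<in> T"
  shows "\<Gamma> \<subseteq> T"
  unfolding closed_graph_def op_graph_def by (rule closure_minimal) (use assms in auto)

lemma closed_graph_orthogonal:
  assumes "(x, y) \<in> \<Gamma>" "w \<in> V"
  shows "inner y w + inner x (D w) = 0"
proof -
  have "\<Gamma> \<subseteq> {p. inner (snd p) w + inner (fst p) (D w) = 0}"
    using D_skew assms(2) by (intro closed_graph_subset_closed closed_Collect_eq continuous_intros) auto
  then show ?thesis
    using assms(1) by auto
qed

lemma closed_graph_unique:
  assumes "(x, y) \<in> \<Gamma>" "(x, y') \<in> \<Gamma>"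
  shows "y = y'"
proof -
  have "(0, y - y') \<in> \<Gamma>"
    using subspace_diff[OF subspace_closed_graph assms] by simp
  then have "inner (y - y') w = 0" if "w \<in> V" for w
    using closed_graph_orthogonal that by fastforce
  then show ?thesis
    using inner_eq_zero_on_dense[OF V_dense, of "y - y'"] by simp
qed

lemma closure_op_eqI:
  assumes "(x, y) \<in> \<Gamma>"
  shows "x \<in> Dom" "A x = y"
  using assms closed_graph_unique unfolding closure_dom_def closure_op_def by blast+

lemma closure_op_in_closed_graph: "x \<in> Dom \<Longrightarrow> (x, A x) \<in> \<Gamma>"
  unfolding closure_dom_def using closure_op_eqI(2) by blast

lemma closure_op_extends: "v \<in> V \<Longrightarrow> v \<in> Dom \<and> A v = D v"
  using closure_op_eqI graph_in_closed_graph by blast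

lemma closure_dom_add:
  assumes "x \<in> Dom" "y \<in> Dom"
  shows "x + y \<in> Dom \<and> A (x + y) = A x + A y"
proof -
  have "(x, A x) + (y, A y) \<in> \<Gamma>"
    using subspace_add[OF subspace_closed_graph] closure_op_in_closed_graph assms by blast
  then show ?thesis
    using closure_op_eqI[of "x + y" "A x + A y"] by simp
qed

lemma closure_dom_scale:
  assumes "x \<in> Dom"
  shows "c *\<^sub>R x \<in> Dom \<and> A (c *\<^sub>R x) = c *\<^sub>R A x"
proof -
  have "c *\<^sub>R (x, A x) \<in> \<Gamma>"
    using subspace_scale[OF subspace_closed_graph] closure_op_in_closed_graph assms by blast
  then show ?thesis
    using closure_op_eqI[of "c *\<^sub>R x" "c *\<^sub>R A x"] by simp
qed

lemma closure_dom_diff: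
  "x \<in> Dom \<Longrightarrow> y \<in> Dom \<Longrightarrow> x - y \<in> Dom \<and> A (x - y) = A x - A y"
  using closure_dom_add[of x "(-1) *\<^sub>R y"] closure_dom_scale[of y "-1"] by simp

lemma closure_dom_zero: "0 \<in> Dom \<and> A 0 = 0"
  using closure_dom_scale[of "0" 0] closure_op_extends[of 0] V_subspace subspace_0 by fastforce

lemma closure_op_skew:
  assumes x: "x \<in> Dom" and y: "y \<in> Dom"
  shows "inner (A x) y = - inner x (A y)"
proof -
  have "\<Gamma> \<subseteq> {p. inner (A x) (fst p) + inner x (snd p) = 0}"
    using closed_graph_orthogonal[OF closure_op_in_closed_graph[OF x]]
    by (intro closed_graph_subset_closed closed_Collect_eq continuous_intros) auto
  then show ?thesis
    using closure_op_in_closed_graph[OF y] by auto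
qed

lemma inner_closure_op_self: "x \<in> Dom \<Longrightarrow> inner (A x) x = 0"
  using closure_op_skew[of x x] by (simp add: inner_commute)

lemma closure_op_inj:
  assumes "closure (D ` V) = UNIV" "x \<in> Dom" "A x = 0"
  shows "x = 0"
proof (rule inner_eq_zero_on_dense[OF assms(1)])
  fix w assume "w \<in> D ` V"
  then obtain v where "v \<in> V" "w = D v"
    by blast
  then show "inner x w = 0"
    using closure_op_skew[of v x] closure_op_extends assms(2,3) by (simp add: inner_commute)
qed

text \<open>Skew symmetry makes \<open>x\<close> and \<open>s A x\<close> orthogonal, so \<open>1 + s A\<close> is bounded below.\<close>

lemma norm_le_id_plus:
  assumes "x \<in> Dom"
  shows "norm x \<le> norm (x + s *\<^sub>R A x)"
proof -
  have "inner (x + s *\<^sub>R A x) (x + s *\<^sub>R A x) = inner x x + s^2 * inner (A x) (A x)"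
    using inner_closure_op_self[OF assms]
    by (simp add: inner_add_left inner_add_right inner_commute power2_eq_square)
  then have "norm x ^2 \<le> norm (x + s *\<^sub>R A x)^2"
    by (simp add: power2_norm_eq_inner)
  then show ?thesis
    by (rule power2_le_imp_le) simp
qed

definition id_plus_range :: "real \<Rightarrow> 'a set" where
  "id_plus_range s = (\<lambda>x. x + s *\<^sub>R A x) ` Dom"

lemma subspace_id_plus_range: "subspace (id_plus_range s)"
  unfolding subspace_def id_plus_range_def
proof (intro conjI ballI allI)
  show "0 \<in> (\<lambda>x. x + s *\<^sub>R A x) ` Dom"
    using closure_dom_zero by force
next
  fix p q assume "p \<in> (\<lambda>x. x + s *\<^sub>R A x) ` Dom" "q \<in> (\<lambda>x. x + s *\<^sub>R A x) ` Dom"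
  then obtain x y where "x \<in> Dom" "y \<in> Dom" "p = x + s *\<^sub>R A x" "q = y + s *\<^sub>R A y"
    by blast
  then show "p + q \<in> (\<lambda>x. x + s *\<^sub>R A x) ` Dom"
    using closure_dom_add[of x y] by (intro image_eqI[of _ _ "x + y"]) (auto simp: algebra_simps)
next
  fix c :: real and p assume "p \<in> (\<lambda>x. x + s *\<^sub>R A x) ` Dom"
  then obtain x where "x \<in> Dom" "p = x + s *\<^sub>R A x"
    by blast
  then show "c *\<^sub>R p \<in> (\<lambda>x. x + s *\<^sub>R A x) ` Dom"
    using closure_dom_scale[of x c] by (intro image_eqI[of _ _ "c *\<^sub>R x"]) (auto simp: algebra_simps)
qed

lemma closed_id_plus_range:
  assumes "s \<noteq> 0"
  shows "closed (id_plus_range s)"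
proof (rule closed_sequential_limits[THEN iffD2], intro allI impI)
  fix y and ys :: "nat \<Rightarrow> 'a"
  assume "(\<forall>n. ys n \<in> id_plus_range s) \<and> ys \<longlonglongrightarrow> y"
  then obtain xs where xs: "\<And>n. xs n \<in> Dom" "\<And>n. ys n = xs n + s *\<^sub>R A (xs n)"
    and ys: "ys \<longlonglongrightarrow> y"
    unfolding id_plus_range_def image_iff by metis
  have "Cauchy xs"
  proof (rule metric_CauchyI)
    fix e :: real assume "0 < e"
    then obtain M where M: "\<And>m n. m \<ge> M \<Longrightarrow> n \<ge> M \<Longrightarrow> dist (ys m) (ys n) < e"
      using metric_CauchyD[OF LIMSEQ_imp_Cauchy[OF ys]] by blast
    have "dist (xs m) (xs n) \<le> dist (ys m) (ys n)" for m n
      using norm_le_id_plus[of "xs m - xs n" s] closure_dom_diff[OF xs(1) xs(1), of m n]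
      by (simp add: dist_norm xs(2) algebra_simps)
    then show "\<exists>M. \<forall>m\<ge>M. \<forall>n\<ge>M. dist (xs m) (xs n) < e"
      using M order_le_less_trans by blast
  qed
  then obtain x where x: "xs \<longlonglongrightarrow> x"
    unfolding Cauchy_convergent_iff convergent_def by blast
  have "A (xs n) = (1 / s) *\<^sub>R (ys n - xs n)" for n
    using assms by (simp add: xs(2))
  then have "(\<lambda>n. (xs n, A (xs n))) \<longlonglongrightarrow> (x, (1 / s) *\<^sub>R (y - x))"
    by (simp add: tendsto_Pair tendsto_intros x ys)
  then have "(x, (1 / s) *\<^sub>R (y - x)) \<in> \<Gamma>"
    by (rule closed_sequentially[OF closed_closed_graph closure_op_in_closed_graph[OF xs(1)]])
  then have "x \<in> Dom" "y = x + s *\<^sub>R A x"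
    using closure_op_eqI assms by auto
  then show "y \<in> id_plus_range s"
    unfolding id_plus_range_def by blast
qed


lemma smooth_dom_closure_dom: "v \<in> smooth_dom V D \<Longrightarrow> v \<in> Dom \<and> A v \<in> Dom"
  unfolding smooth_dom_def by (auto dest!: bspec[of _ _ 2] simp: numeral_2_eq_2)

lemma smooth_dom_invariant:
  assumes C: "\<And>x. x \<in> Dom \<Longrightarrow> C x \<in> Dom \<and> A (C x) = C (A x)"
    and v: "v \<in> smooth_dom V D"
  shows "C v \<in> smooth_dom V D"
proof -
  have "C x \<in> closure_pow_dom V D n" if "x \<in> closure_pow_dom V D n" for n x
    using that by (induction n arbitrary: x) (auto simp: C)
  then show ?thesis
    using v unfolding smooth_dom_def by blast
qed

end

section \<open>Resolvents of the closure of the generator\<close>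

lemma eq_half_sum_if_eq_double_diff:
  fixes a b c :: "'b::real_vector"
  shows "a = 2 *\<^sub>R b - c \<Longrightarrow> b = (1/2) *\<^sub>R (c + a)"
  by (simp add: algebra_simps)

lemma has_real_derivative_inner_left:
  assumes "(f has_vector_derivative f') F"
  shows "((\<lambda>t. inner (f t) w) has_real_derivative inner f' w) F"
  using bounded_linear.has_vector_derivative[OF bounded_linear_inner_left assms]
  by (simp add: has_real_derivative_iff_has_vector_derivative)

lemma bounded_exponential_solution_zero:
  fixes f :: "real \<Rightarrow> real"
  assumes deriv: "\<And>t. (f has_real_derivative (c * f t)) (at t)" and "c \<noteq> 0"
    and bounded: "\<And>t. \<bar>f t\<bar> \<le> K"
  shows "f 0 = 0"
proof (rule ccontr)
  assume "f 0 \<noteq> 0"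
  have "((\<lambda>t. exp (- c * t) * f t) has_real_derivative 0) (at t)" for t
  proof -
    have "((\<lambda>t. exp (- c * t)) has_real_derivative exp (- c * t) * (- c)) (at t)"
      by (auto intro!: derivative_eq_intros)
    from DERIV_mult[OF this deriv] show ?thesis
      by (simp add: algebra_simps)
  qed
  then have "exp (- c * t) * f t = f 0" for t
    using DERIV_isconst_all[of "\<lambda>t. exp (- c * t) * f t" t 0] by simp
  then have f_exp: "f t = exp (c * t) * f 0" for t
    by (metis exp_minus_inverse mult.assoc mult.commute mult_1 mult_minus_left)
  define t where "t = ln ((\<bar>K\<bar> + 1) / \<bar>f 0\<bar>) / c"
  have "exp (c * t) = (\<bar>K\<bar> + 1) / \<bar>f 0\<bar>"
    using \<open>c \<noteq> 0\<close> \<open>f 0 \<noteq> 0\<close> by (simp add: t_def)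
  then have "\<bar>f t\<bar> = \<bar>K\<bar> + 1"
    using \<open>f 0 \<noteq> 0\<close> f_exp[of t] by (simp add: abs_mult)
  then show False
    using bounded[of t] by simp
qed

locale orthogonal_generator = skew_operator V D
  for V :: "'a::{real_inner, complete_space} set" and D +
  fixes \<gamma> :: "real \<Rightarrow> 'a \<Rightarrow> 'a"
  assumes \<gamma>_maps: "\<forall>t. \<forall>v\<in>V. \<gamma> t v \<in> V"
    and \<gamma>_add: "\<forall>t. \<forall>v\<in>V. \<forall>w\<in>V. \<gamma> t (v + w) = \<gamma> t v + \<gamma> t w"
    and \<gamma>_scale: "\<forall>t. \<forall>v\<in>V. \<forall>c::real. \<gamma> t (c *\<^sub>R v) = c *\<^sub>R \<gamma> t v"
    and \<gamma>_orth: "\<forall>t. \<forall>v\<in>V. \<forall>w\<in>V. inner (\<gamma> t v) (\<gamma> t w) = inner v w"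
    and \<gamma>_zero: "\<forall>v\<in>V. \<gamma> 0 v = v"
    and \<gamma>_group: "\<forall>s t. \<forall>v\<in>V. \<gamma> (s + t) v = \<gamma> s (\<gamma> t v)"
    and \<gamma>_gen: "\<forall>v\<in>V. ((\<lambda>t. \<gamma> t v) has_vector_derivative D v) (at 0)"
begin

lemma norm_gamma: "v \<in> V \<Longrightarrow> norm (\<gamma> t v) = norm v"
  using \<gamma>_orth by (simp add: norm_eq_sqrt_inner)

lemma has_real_derivative_inner_gamma:
  assumes "v \<in> V"
  shows "((\<lambda>t. inner (\<gamma> t v) w) has_real_derivative inner (D (\<gamma> t v)) w) (at t)"
proof -
  have "((\<lambda>h. inner (\<gamma> h (\<gamma> t v)) w) has_real_derivative inner (D (\<gamma> t v)) w) (at 0)"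
    by (rule has_real_derivative_inner_left) (use \<gamma>_gen \<gamma>_maps assms in blast)
  moreover have "\<gamma> h (\<gamma> t v) = \<gamma> (h + t) v" for h
    using \<gamma>_group assms by simp
  ultimately show ?thesis
    using DERIV_shift[of "\<lambda>t. inner (\<gamma> t v) w" _ 0 t] by simp
qed

text \<open>A vector \<open>w\<close> orthogonal to the range of \<open>1 + s A\<close> gives the bounded solution
  \<open>t \<mapsto> inner (\<gamma> t v) w\<close> of \<open>f' = - f / s\<close>, which must vanish.\<close>

lemma id_plus_range_UNIV:
  assumes "s \<noteq> 0"
  shows "id_plus_range s = UNIV"
proof -
  have "w = 0" if perp: "\<And>z. z \<in> id_plus_range s \<Longrightarrow> inner w z = 0" for w
  proof (rule inner_eq_zero_on_dense[OF V_dense])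
    fix v assume "v \<in> V"
    define f where "f t = inner (\<gamma> t v) w" for t
    have deriv: "(f has_real_derivative (- 1 / s) * f t) (at t)" for t
    proof -
      have "\<gamma> t v \<in> V"
        using \<gamma>_maps \<open>v \<in> V\<close> by blast
      then have "\<gamma> t v + s *\<^sub>R A (\<gamma> t v) \<in> id_plus_range s"
        unfolding id_plus_range_def using closure_op_extends by blast
      then have "inner w (\<gamma> t v + s *\<^sub>R A (\<gamma> t v)) = 0"
        by (rule perp)
      then have "inner w (\<gamma> t v) + s * inner w (D (\<gamma> t v)) = 0"
        using closure_op_extends[OF \<open>\<gamma> t v \<in> V\<close>] by (simp add: inner_add_right)
      then have "inner (D (\<gamma> t v)) w = (- 1 / s) * f t"
        using assms by (simp add: f_def inner_commute field_simps)
      then show ?thesis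
        using has_real_derivative_inner_gamma[OF \<open>v \<in> V\<close>, of w t] by (simp add: f_def[abs_def])
    qed
    have bounded: "\<bar>f t\<bar> \<le> norm v * norm w" for t
      using Cauchy_Schwarz_ineq2[of "\<gamma> t v" w] norm_gamma[OF \<open>v \<in> V\<close>] by (simp add: f_def)
    have "f 0 = 0"
      by (rule bounded_exponential_solution_zero[OF deriv _ bounded]) (use assms in simp)
    then show "inner w v = 0"
      using \<gamma>_zero \<open>v \<in> V\<close> by (simp add: f_def inner_commute)
  qed
  then have "closure (id_plus_range s) = UNIV"
    by (intro subspace_dense_if_orthogonal_trivial subspace_id_plus_range) blast
  then show ?thesis
    using closed_id_plus_range[OF assms] by (simp add: closure_closed)
qed

definition resolvent :: "real \<Rightarrow> 'a \<Rightarrow> 'a" where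
  "resolvent s y = (SOME x. x \<in> Dom \<and> x + s *\<^sub>R A x = y)"

lemma resolvent:
  assumes "s \<noteq> 0"
  shows "resolvent s y \<in> Dom" "resolvent s y + s *\<^sub>R A (resolvent s y) = y"
proof -
  have "y \<in> id_plus_range s"
    by (simp add: id_plus_range_UNIV[OF assms])
  then obtain x where "x \<in> Dom" "y = x + s *\<^sub>R A x"
    unfolding id_plus_range_def by (rule imageE)
  then have "\<exists>x. x \<in> Dom \<and> x + s *\<^sub>R A x = y"
    by blast
  then show "resolvent s y \<in> Dom" "resolvent s y + s *\<^sub>R A (resolvent s y) = y"
    unfolding resolvent_def by (metis (mono_tags, lifting) someI_ex)+
qed

lemma resolvent_eqI:
  assumes "s \<noteq> 0" "x \<in> Dom" "x + s *\<^sub>R A x = y"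
  shows "resolvent s y = x"
proof -
  let ?r = "resolvent s y"
  have d: "?r - x \<in> Dom" "A (?r - x) = A ?r - A x"
    using closure_dom_diff[OF resolvent(1)[OF assms(1)] assms(2)] by auto
  have "norm (?r - x) \<le> norm ((?r - x) + s *\<^sub>R A (?r - x))"
    by (rule norm_le_id_plus[OF d(1)])
  also have "(?r - x) + s *\<^sub>R A (?r - x) = (?r + s *\<^sub>R A ?r) - (x + s *\<^sub>R A x)"
    unfolding d(2) by (simp add: algebra_simps)
  also have "\<dots> = 0"
    using resolvent(2)[OF assms(1), of y] assms(3) by simp
  finally show ?thesis
    by simp
qed

lemma bounded_linear_resolvent:
  assumes "s \<noteq> 0"
  shows "bounded_linear (resolvent s)"
proof (rule bounded_linear_intro[where K=1])
  note r = resolvent[OF assms]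
  show "resolvent s (y + z) = resolvent s y + resolvent s z" for y z
    using closure_dom_add[OF r(1) r(1)] r(2)[of y] r(2)[of z]
    by (intro resolvent_eqI[OF assms]) (auto simp: algebra_simps)
  show "resolvent s (c *\<^sub>R y) = c *\<^sub>R resolvent s y" for c y
  proof (rule resolvent_eqI[OF assms])
    have "c *\<^sub>R resolvent s y + s *\<^sub>R A (c *\<^sub>R resolvent s y)
        = c *\<^sub>R (resolvent s y + s *\<^sub>R A (resolvent s y))"
      using closure_dom_scale[OF r(1)] by (simp add: scaleR_add_right scaleR_left_commute)
    then show "c *\<^sub>R resolvent s y + s *\<^sub>R A (c *\<^sub>R resolvent s y) = c *\<^sub>R y"
      by (simp add: r(2))
  qed (use closure_dom_scale[OF r(1)] in blast)
  show "norm (resolvent s y) \<le> norm y * 1" for y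
    using norm_le_id_plus[OF r(1), where s=s] by (simp add: r(2))
qed

abbreviation "R \<equiv> resolvent (-1)"
abbreviation "R' \<equiv> resolvent 1"

lemma R: "R y \<in> Dom" "A (R y) = R y - y"
  using resolvent[of "-1" y] by (simp_all add: algebra_simps)

lemma R': "R' y \<in> Dom" "A (R' y) = y - R' y"
  using resolvent[of 1 y] by (simp_all add: algebra_simps)

lemma R_eqI: "x \<in> Dom \<Longrightarrow> R (x - A x) = x"
  by (rule resolvent_eqI) simp_all

lemma R'_eqI: "x \<in> Dom \<Longrightarrow> R' (x + A x) = x"
  by (rule resolvent_eqI) simp_all

lemma bounded_linear_R: "bounded_linear R" and bounded_linear_R': "bounded_linear R'"
  by (simp_all add: bounded_linear_resolvent)

lemma R_adjoint: "inner (R x) y = inner x (R' y)"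
  using closure_op_skew[OF R(1) R'(1), of x y] R(2)[of x] R'(2)[of y]
  by (simp add: inner_diff_left inner_diff_right algebra_simps)


lemma R_R'_eq: "R (R' y) = (1/2) *\<^sub>R (R y + R' y)"
proof -
  have "R' y = R (R' y - A (R' y))"
    using R_eqI[OF R'(1)] by simp
  also have "\<dots> = 2 *\<^sub>R R (R' y) - R y"
    by (simp add: R'(2) scaleR_2 linear_simps[OF bounded_linear_R])
  finally show ?thesis
    by (simp add: eq_half_sum_if_eq_double_diff)
qed

lemma R'_R_eq: "R' (R y) = (1/2) *\<^sub>R (R y + R' y)"
proof -
  have "R y = R' (R y + A (R y))"
    using R'_eqI[OF R(1)] by simp
  also have "\<dots> = 2 *\<^sub>R R' (R y) - R' y"
    by (simp add: R(2) scaleR_2 linear_simps[OF bounded_linear_R'])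
  finally show ?thesis
    by (simp add: eq_half_sum_if_eq_double_diff add.commute)
qed

text \<open>\<open>B = A (1 - A)\<^sup>-\<^sup>1 (1 + A)\<^sup>-\<^sup>1\<close>, a bounded version of \<open>A\<close>.\<close>

definition B :: "'a \<Rightarrow> 'a" where
  "B y = (1/2) *\<^sub>R (R y - R' y)"

lemma bounded_linear_B: "bounded_linear B"
  unfolding B_def[abs_def]
  by (intro bounded_linear_compose[OF bounded_linear_scaleR_right] bounded_linear_sub
      bounded_linear_R bounded_linear_R')

lemma R'_adjoint: "inner (R' x) y = inner x (R y)"
  using R_adjoint[of y x] by (simp add: inner_commute)

lemma B_skew: "inner (B x) y = - inner x (B y)"
  by (simp add: B_def inner_diff_left inner_diff_right R_adjoint R'_adjoint algebra_simps)

lemma A_R_R': "A (R (R' y)) = B y"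
proof -
  have "A (R (R' y)) = R (R' y) - R' y"
    by (rule R(2))
  also have "\<dots> = B y"
    by (simp add: R_R'_eq B_def algebra_simps) (simp flip: scaleR_add_left)
  finally show ?thesis .
qed

lemma B_inj:
  assumes "closure (D ` V) = UNIV" "B y = 0"
  shows "y = 0"
proof -
  have "R (R' y) = 0"
    using closure_op_inj[OF assms(1) R(1)] assms(2) by (simp add: A_R_R')
  then have "R' y = 0"
    using R(2)[of "R' y"] A_R_R'[of y] assms(2) by simp
  then show ?thesis
    using R'(2)[of y] closure_dom_zero by simp
qed

lemma R_B: "R (B y) = B (R y)" and R'_B: "R' (B y) = B (R' y)"
  by (simp_all add: B_def linear_simps[OF bounded_linear_R] linear_simps[OF bounded_linear_R']
      R_R'_eq R'_R_eq)

lemma R_commute_closure_dom: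
  assumes C: "bounded_linear C" "\<And>y. C (R y) = R (C y)" and x: "x \<in> Dom"
  shows "C x \<in> Dom \<and> A (C x) = C (A x)"
proof -
  have "C x = R (C (x - A x))"
    using C(2) R_eqI[OF x] by metis
  then show ?thesis
    using R[of "C (x - A x)"] R_eqI[OF x] C(2)[of "x - A x"] by (simp add: linear_simps[OF C(1)])
qed

lemma smooth_eq_R_R':
  assumes "v \<in> Dom" "A v \<in> Dom"
  shows "v = R (R' (v - A (A v)))"
proof -
  have "v - A v \<in> Dom" "(v - A v) + A (v - A v) = v - A (A v)"
    using closure_dom_diff[OF assms] by auto
  then show ?thesis
    using R'_eqI R_eqI[OF assms(1)] by metis
qed

abbreviation "G t \<equiv> closure_op V (\<gamma> t)"

lemma G: "bounded_linear (G t)" "v \<in> V \<Longrightarrow> G t v = \<gamma> t v"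
proof -
  obtain g where g: "bounded_linear g" "\<And>v. v \<in> V \<Longrightarrow> g v = \<gamma> t v"
  proof (rule bounded_linear_extension[OF V_subspace V_dense, of "\<gamma> t" 1])
    show "\<gamma> t (x + y) = \<gamma> t x + \<gamma> t y" if "x \<in> V" "y \<in> V" for x y
      using \<gamma>_add that by blast
    show "\<gamma> t (c *\<^sub>R x) = c *\<^sub>R \<gamma> t x" if "x \<in> V" for x c
      using \<gamma>_scale that by blast
    show "norm (\<gamma> t x) \<le> 1 * norm x" if "x \<in> V" for x
      using norm_gamma[OF that] by simp
  qed auto
  have "G t = g"
    using closure_op_eq_continuous_extension[OF linear_continuous_on[OF g(1)] V_dense g(2)] by blast
  then show "bounded_linear (G t)" "v \<in> V \<Longrightarrow> G t v = \<gamma> t v"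
    using g by simp_all
qed

text \<open>Both sides are the derivative of \<open>h \<mapsto> \<gamma> (t + h) v\<close> at 0.\<close>

lemma D_gamma: "v \<in> V \<Longrightarrow> D (\<gamma> t v) = G t (D v)"
proof -
  assume v: "v \<in> V"
  have "(\<lambda>h. \<gamma> h (\<gamma> t v)) = (\<lambda>h. \<gamma> (t + h) v)" "(\<lambda>h. G t (\<gamma> h v)) = (\<lambda>h. \<gamma> (t + h) v)"
    using \<gamma>_maps G(2) v by (simp_all add: \<gamma>_group[rule_format, OF v, symmetric] add.commute)
  moreover have "((\<lambda>h. \<gamma> h (\<gamma> t v)) has_vector_derivative D (\<gamma> t v)) (at 0)"
    using \<gamma>_gen \<gamma>_maps v by blast
  moreover have "((\<lambda>h. G t (\<gamma> h v)) has_vector_derivative G t (D v)) (at 0)"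
    using bounded_linear.has_vector_derivative[OF G(1)] \<gamma>_gen v by blast
  ultimately show ?thesis
    using vector_derivative_unique_at by metis
qed

lemma G_closure_dom:
  assumes "x \<in> Dom"
  shows "G t x \<in> Dom \<and> A (G t x) = G t (A x)"
proof -
  define \<Phi> where "\<Phi> p = (G t (fst p), G t (snd p))" for p
  have G_cont: "continuous_on UNIV (G t)"
    by (rule linear_continuous_on[OF G(1)])
  have "continuous_on UNIV (\<lambda>p::'a \<times> 'a. G t (fst p))" "continuous_on UNIV (\<lambda>p::'a \<times> 'a. G t (snd p))"
    by (rule continuous_on_compose2[OF G_cont], auto intro: continuous_intros)+
  then have cont: "continuous_on UNIV \<Phi>"
    unfolding \<Phi>_def[abs_def] by (rule continuous_on_Pair)
  have "\<Phi> (v, D v) \<in> \<Gamma>" if "v \<in> V" for v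
  proof -
    have "\<Phi> (v, D v) = (\<gamma> t v, D (\<gamma> t v))"
      using that by (simp add: \<Phi>_def G(2) D_gamma)
    then show ?thesis
      using graph_in_closed_graph \<gamma>_maps that by auto
  qed
  then have "\<Phi> ` op_graph V D \<subseteq> \<Gamma>"
    by (auto simp: op_graph_def)
  then have "\<Phi> ` \<Gamma> \<subseteq> \<Gamma>"
    unfolding closed_graph_def
    by (rule image_closure_subset[OF continuous_on_subset[OF cont subset_UNIV] closed_closure])
  then have "\<Phi> (x, A x) \<in> \<Gamma>"
    using closure_op_in_closed_graph[OF assms] by blast
  then show ?thesis
    using closure_op_eqI by (simp add: \<Phi>_def)
qed

lemma G_resolvent:
  assumes "s \<noteq> 0"
  shows "G t (resolvent s y) = resolvent s (G t y)"
proof (rule resolvent_eqI[OF assms, symmetric])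
  let ?r = "resolvent s y"
  have r: "G t ?r \<in> Dom" "A (G t ?r) = G t (A ?r)"
    using G_closure_dom[OF resolvent(1)[OF assms]] by auto
  then show "G t ?r \<in> Dom"
    by blast
  have "G t ?r + s *\<^sub>R A (G t ?r) = G t (?r + s *\<^sub>R A ?r)"
    by (simp add: r(2) linear_simps[OF G(1)])
  then show "G t ?r + s *\<^sub>R A (G t ?r) = G t y"
    by (simp add: resolvent(2)[OF assms])
qed

lemma G_B: "G t (B y) = B (G t y)"
  by (simp add: B_def linear_simps[OF G(1)] G_resolvent)


section \<open>The complex structure\<close>

context
  fixes I M :: "'a \<Rightarrow> 'a"
  assumes polar: "skew_polar_decomposition B I M"
begin

lemma polar_facts:
  "bounded_linear I" "bounded_linear M" "self_adjoint M" "positive_op M"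
  "\<And>x. M x = 0 \<Longrightarrow> x = 0" "\<And>x. I (M x) = B x" "\<And>x. I (I x) = - x"
  "\<And>x y. inner (I x) (I y) = inner x y"
  "\<And>C y. bounded_linear C \<Longrightarrow> (\<And>y. C (B y) = B (C y)) \<Longrightarrow> C (I y) = I (C y)"
  "\<And>C y. bounded_linear C \<Longrightarrow> (\<And>y. C (B y) = B (C y)) \<Longrightarrow> C (M y) = M (C y)"
  using polar unfolding skew_polar_decomposition_def by blast+

lemma I_closure_dom: "x \<in> Dom \<Longrightarrow> I x \<in> Dom \<and> A (I x) = I (A x)"
  by (rule R_commute_closure_dom[OF polar_facts(1) polar_facts(9)[OF bounded_linear_R R_B, symmetric]])

lemma I_smooth_dom: "v \<in> smooth_dom V D \<Longrightarrow> I v \<in> smooth_dom V D"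
  by (rule smooth_dom_invariant[where C=I, OF I_closure_dom])

lemma G_I: "G t (I v) = I (G t v)"
  by (rule polar_facts(9)[OF G(1) G_B])

lemma closure_op_minus_I:
  assumes "v \<in> smooth_dom V D"
  shows "A (- I v) = M (v - A (A v))"
proof -
  have v: "v \<in> Dom" "A v \<in> Dom"
    using smooth_dom_closure_dom[OF assms] by auto
  have "A (- I v) = - I (A v)"
    using closure_dom_scale[of "I v" "-1"] I_closure_dom[OF v(1)] by simp
  also have "A v = B (v - A (A v))"
    by (subst smooth_eq_R_R'[OF v]) (rule A_R_R')
  also have "- I (B (v - A (A v))) = M (v - A (A v))"
    by (simp add: polar_facts(6)[symmetric] polar_facts(7))
  finally show ?thesis .
qed

lemma omega_eq:
  assumes "v \<in> smooth_dom V D" "w \<in> smooth_dom V D"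
  shows "inner (A (- I v)) w = inner (M (R' (v - A (A v)))) (R' (w - A (A w)))"
proof -
  have "w = R (R' (w - A (A w)))"
    using smooth_dom_closure_dom[OF assms(2)] smooth_eq_R_R' by blast
  then have "inner (A (- I v)) w = inner (R' (M (v - A (A v)))) (R' (w - A (A w)))"
    unfolding closure_op_minus_I[OF assms(1)] by (metis R'_adjoint)
  also have "R' (M (v - A (A v))) = M (R' (v - A (A v)))"
    by (rule polar_facts(10)[OF bounded_linear_R' R'_B])
  finally show ?thesis .
qed

lemma omega_symmetric:
  assumes "v \<in> smooth_dom V D" "w \<in> smooth_dom V D"
  shows "inner (A (- I v)) w = inner (A (- I w)) v"
  using polar_facts(3) unfolding omega_eq[OF assms] omega_eq[OF assms(2,1)]
  by (simp add: self_adjoint_def inner_commute)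

lemma omega_positive:
  assumes "v \<in> smooth_dom V D" "v \<noteq> 0"
  shows "inner (A (- I v)) v > 0"
proof -
  define a where "a = R' (v - A (A v))"
  have "a \<noteq> 0"
  proof
    assume "a = 0"
    then have "v = 0"
      using smooth_dom_closure_dom[OF assms(1)] smooth_eq_R_R' linear_simps(3)[OF bounded_linear_R]
      unfolding a_def by metis
    with assms(2) show False ..
  qed
  then have "M a \<noteq> 0"
    using polar_facts(5) by blast
  then have "inner (M a) a \<noteq> 0"
    using positive_op_inner_eq_zero[OF bounded_linear.linear polar_facts(3,4)] polar_facts(2) by blast
  moreover have "inner (M a) a \<ge> 0"
    using polar_facts(4) by (simp add: positive_op_def)
  ultimately show ?thesis
    using omega_eq[OF assms(1) assms(1)] by (simp add: a_def)
qed

end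

end

theorem proposition4p7:
  fixes V :: "'a::{real_inner, complete_space} set"
    and D :: "'a \<Rightarrow> 'a"
    and \<gamma> :: "real \<Rightarrow> 'a \<Rightarrow> 'a"
  assumes V_subspace: "subspace V"
    and V_dense: "closure V = UNIV"
    and D_maps: "\<forall>v\<in>V. D v \<in> V"
    and D_add: "\<forall>v\<in>V. \<forall>w\<in>V. D (v + w) = D v + D w"
    and D_scale: "\<forall>v\<in>V. \<forall>c::real. D (c *\<^sub>R v) = c *\<^sub>R D v"
    and D_skew: "\<forall>v\<in>V. \<forall>w\<in>V. inner (D v) w = - inner v (D w)"
    and \<gamma>_maps: "\<forall>t. \<forall>v\<in>V. \<gamma> t v \<in> V"
    and \<gamma>_add: "\<forall>t. \<forall>v\<in>V. \<forall>w\<in>V. \<gamma> t (v + w) = \<gamma> t v + \<gamma> t w"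
    and \<gamma>_scale: "\<forall>t. \<forall>v\<in>V. \<forall>c::real. \<gamma> t (c *\<^sub>R v) = c *\<^sub>R \<gamma> t v"
    and \<gamma>_orth: "\<forall>t. \<forall>v\<in>V. \<forall>w\<in>V. inner (\<gamma> t v) (\<gamma> t w) = inner v w"
    and \<gamma>_zero: "\<forall>v\<in>V. \<gamma> 0 v = v"
    and \<gamma>_group: "\<forall>s t. \<forall>v\<in>V. \<gamma> (s + t) v = \<gamma> s (\<gamma> t v)"
    and \<gamma>_cont: "\<forall>v\<in>V. continuous_on UNIV (\<lambda>t. \<gamma> t v)"
    and \<gamma>_gen: "\<forall>v\<in>V. ((\<lambda>t. \<gamma> t v) has_vector_derivative D v) (at 0)"
    and DV_dense: "closure (D ` V) = UNIV"
  shows "\<exists>I :: 'a \<Rightarrow> 'a.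
     (\<forall>v\<in>smooth_dom V D. I v \<in> smooth_dom V D)
   \<and> (\<forall>v\<in>smooth_dom V D. \<forall>w\<in>smooth_dom V D. I (v + w) = I v + I w)
   \<and> (\<forall>v\<in>smooth_dom V D. \<forall>c::real. I (c *\<^sub>R v) = c *\<^sub>R I v)
   \<and> (\<forall>v\<in>smooth_dom V D. I (I v) = - v)
   \<and> (\<forall>v\<in>smooth_dom V D. \<forall>w\<in>smooth_dom V D. inner (I v) (I w) = inner v w)
   \<and> (\<forall>t. \<forall>v\<in>smooth_dom V D.
        closure_op V (\<gamma> t) (I v) = I (closure_op V (\<gamma> t) v))
   \<and> (\<forall>v\<in>smooth_dom V D. \<forall>w\<in>smooth_dom V D.
        inner (closure_op V D (- I v)) w = inner (closure_op V D (- I w)) v)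
   \<and> (\<forall>v\<in>smooth_dom V D. v \<noteq> 0 \<longrightarrow> inner (closure_op V D (- I v)) v > 0)"
proof -
  interpret orthogonal_generator V D \<gamma>
    using assms by unfold_locales auto
  obtain I M where polar: "skew_polar_decomposition B I M"
    using skew_polar_decomposition_exists[OF bounded_linear_B B_skew B_inj[OF DV_dense]] by blast
  show ?thesis
  proof (intro exI[of _ I] conjI ballI allI impI)
    show "I (v + w) = I v + I w" "I (c *\<^sub>R v) = c *\<^sub>R I v" for v w c
      using polar_facts(1)[OF polar] by (simp_all add: linear_simps)
  qed (simp_all add: polar_facts[OF polar] I_smooth_dom[OF polar] G_I[OF polar]
      omega_symmetric[OF polar] omega_positive[OF polar])
qed

end
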